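(* Under the assumptions of the setting below, let $\alpha\in\mathbb{C}$ with $|\alpha|\le 1$, $\alpha\notin\{0,1\}$, be a root of $G_X(s)G_{c\theta}(1/s)=1$, and let $$P(s)=\sum_{i=0}^{m-1}\pi_i\sum_{j=0}^{m-i-1}s^{j+i}F(-m+j).$$ Then $P(\alpha)=0$. Moreover, if $r\in\{1,\dots,m-1\}$ is the multiplicity of the root $\alpha$, then $P^{(n)}(\alpha)=0$ for all $n\in\{0,1,\dots,r-1\}$.
   Context: $X$ and $c\theta$ ($c>0$) are independent, non-negative, integer-valued random variables with $\mathbb{P}(c\theta\le m)=1$ for some $m\in\mathbb{N}$, and the net profit condition $c\,\mathbb{E}\theta-\mathbb{E}X>0$ holds. $X_1,X_2,\dots$ and $\theta_1,\theta_2,\dots$ are i.i.d. copies of $X$ and $\theta$, all mutually independent. $\mathcal M=\big(\sup_{n\ge1}\sum_{i=1}^n(X_i-c\theta_i)\big)^+$, $\pi_i=\mathbb{P}(\mathcal M=i)$. For a non-negative integer-valued $Z$, $G_Z(s)=\sum_k\mathbb{P}(Z=k)s^k$. For $j\in\mathbb{Z}$, $F(j)=\mathbb{P}(X-c\theta\le j)$. *)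

theory Defs
  imports "HOL-Probability.Probability"
begin

definition pgf :: "'a measure \<Rightarrow> ('a \<Rightarrow> real) \<Rightarrow> complex \<Rightarrow> complex" where
  "pgf M Z s = (\<Sum>k. complex_of_real (measure M {\<omega> \<in> space M. Z \<omega> = real k}) * s ^ k)"

text \<open>The random variable (sup_{n>=1} sum_{i=1}^n (X_i - c theta_i))^+, as an extended real;
  copies are indexed from 0, so the n-th partial sum is the sum over i < n.\<close>
definition walk_sup :: "(nat \<Rightarrow> 'a \<Rightarrow> nat) \<Rightarrow> real \<Rightarrow> (nat \<Rightarrow> 'a \<Rightarrow> real) \<Rightarrow> 'a \<Rightarrow> ereal" where
  "walk_sup X c \<theta> \<omega> =
     max 0 (SUP n\<in>{1..}. ereal (\<Sum>i<n. real (X i \<omega>) - c * \<theta> i \<omega>))"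

definition higher_derivs_within ::
  "(complex \<Rightarrow> complex) \<Rightarrow> complex set \<Rightarrow> nat \<Rightarrow> (nat \<Rightarrow> complex \<Rightarrow> complex) \<Rightarrow> bool" where
  "higher_derivs_within f S n ds \<longleftrightarrow>
     (\<forall>z\<in>S. ds 0 z = f z) \<and>
     (\<forall>k<n. \<forall>z\<in>S. (ds k has_field_derivative ds (Suc k) z) (at z within S))"

definition root_multiplicity_disc :: "(complex \<Rightarrow> complex) \<Rightarrow> complex \<Rightarrow> nat \<Rightarrow> bool" where
  "root_multiplicity_disc f \<alpha> r \<longleftrightarrow>
     (\<exists>\<epsilon>>0. \<exists>ds. higher_derivs_within f (cball 0 1 \<inter> ball \<alpha> \<epsilon>) r ds \<and>
        (\<forall>k<r. ds k \<alpha> = 0) \<and> ds r \<alpha> \<noteq> 0)"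

definition Ppoly :: "nat \<Rightarrow> (nat \<Rightarrow> real) \<Rightarrow> (int \<Rightarrow> real) \<Rightarrow> complex \<Rightarrow> complex" where
  "Ppoly m \<pi> F s = (\<Sum>i<m. complex_of_real (\<pi> i) *
      (\<Sum>j<m - i. s ^ (j + i) * complex_of_real (F (- int m + int j))))"

end

theory Submission
  imports Defs "HOL-Complex_Analysis.Complex_Analysis"
begin

text \<open>
  Let \<open>M'\<close> be the supremum of the walk started at its second step. It is independent of
  \<open>(X\<^sub>0, \<theta>\<^sub>0)\<close>, has the law of \<open>M\<close>, and \<open>M = max 0 (X\<^sub>0 - c\<theta>\<^sub>0 + M')\<close>.
  Since \<open>c\<theta> \<le> m\<close>, the positive part only matters when \<open>M' < m\<close>, so computing
  \<open>E s\<^bsup>m+M\<^esup>\<close> for \<open>0 < |s| \<le> 1\<close> yields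
  \<open>(s - 1) P(s) = - s\<^sup>m E[s\<^sup>M] (G\<^sub>X(s) G\<^bsub>c\<theta>\<^esub>(1/s) - 1)\<close> with \<open>|E[s\<^sup>M]| \<le> 1\<close>.
  Near a root \<open>\<alpha> \<noteq> 1\<close> of \<open>G\<^sub>X(s) G\<^bsub>c\<theta>\<^esub>(1/s) = 1\<close>, \<open>P\<close> is therefore bounded on the closed
  disc by a multiple of \<open>G\<^sub>X(s) G\<^bsub>c\<theta>\<^esub>(1/s) - 1\<close>, hence by \<open>K |z - \<alpha>|\<^sup>r\<close>; an entire
  function with such a bound along a set accumulating at \<open>\<alpha>\<close> vanishes there to order \<open>r\<close>.
\<close>

section \<open>Orders of zeros\<close>

lemma norm_le_power_Suc_if_deriv_norm_le_power:
  fixes g g' :: "complex \<Rightarrow> complex"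
  assumes "convex S" and "\<alpha> \<in> S" and "z \<in> S" and "g \<alpha> = 0" and "K \<ge> 0"
    and deriv: "\<And>w. w \<in> S \<Longrightarrow> (g has_field_derivative g' w) (at w within S)"
    and bound: "\<And>w. w \<in> S \<Longrightarrow> norm (g' w) \<le> K * norm (w - \<alpha>) ^ j"
  shows "norm (g z) \<le> K * norm (z - \<alpha>) ^ Suc j"
proof -
  have seg: "closed_segment \<alpha> z \<subseteq> S"
    using assms(1-3) by (simp add: closed_segment_subset)
  have "norm (g z - g \<alpha>) \<le> (K * norm (z - \<alpha>) ^ j) * norm (z - \<alpha>)"
  proof (rule field_differentiable_bound[where S = "closed_segment \<alpha> z" and f' = g'])
    fix w assume w: "w \<in> closed_segment \<alpha> z"
    show "(g has_field_derivative g' w) (at w within closed_segment \<alpha> z)"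
      using deriv seg w by (blast intro: has_field_derivative_subset)
    have "norm (g' w) \<le> K * norm (w - \<alpha>) ^ j"
      using bound seg w by blast
    also have "\<dots> \<le> K * norm (z - \<alpha>) ^ j"
      using \<open>K \<ge> 0\<close> by (intro mult_left_mono power_mono segment_bound1[OF w]) auto
    finally show "norm (g' w) \<le> K * norm (z - \<alpha>) ^ j" .
  qed auto
  then show ?thesis
    using \<open>g \<alpha> = 0\<close> by (simp add: algebra_simps)
qed

lemma norm_le_power_if_top_deriv_norm_le:
  fixes ds :: "nat \<Rightarrow> complex \<Rightarrow> complex"
  assumes "convex S" and "\<alpha> \<in> S" and "K \<ge> 0" and "k < r" and "z \<in> S"
    and deriv: "\<And>k w. k < r \<Longrightarrow> w \<in> S \<Longrightarrow> (ds k has_field_derivative ds (Suc k) w) (at w within S)"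
    and zero: "\<forall>k<r. ds k \<alpha> = 0"
    and top: "\<And>z. z \<in> S \<Longrightarrow> norm (ds (r - 1) z) \<le> K * norm (z - \<alpha>)"
  shows "norm (ds k z) \<le> K * norm (z - \<alpha>) ^ (r - k)"
proof -
  have "r > 0"
    using \<open>k < r\<close> by simp
  have "\<forall>z\<in>S. norm (ds k z) \<le> K * norm (z - \<alpha>) ^ (r - k)" if "k \<le> r - 1" for k
    using that
  proof (induction k rule: inc_induct)
    case base
    show ?case
      using top \<open>r > 0\<close> by simp
  next
    case (step k)
    show ?case
    proof
      fix z assume "z \<in> S"
      have "norm (ds k z) \<le> K * norm (z - \<alpha>) ^ Suc (r - Suc k)"
        using step zero deriv
        by (intro norm_le_power_Suc_if_deriv_norm_le_power[OF \<open>convex S\<close> \<open>\<alpha> \<in> S\<close> \<open>z \<in> S\<close> _ \<open>K \<ge> 0\<close>]) auto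
      then show "norm (ds k z) \<le> K * norm (z - \<alpha>) ^ (r - k)"
        using step.hyps by (simp add: Suc_diff_Suc)
    qed
  qed
  then show ?thesis
    using \<open>k < r\<close> \<open>z \<in> S\<close> by simp
qed

lemma higher_derivs_within_zero_imp_norm_le_power:
  fixes f :: "complex \<Rightarrow> complex"
  assumes derivs: "higher_derivs_within f S r ds" and "convex S" and "\<alpha> \<in> S"
    and zero: "\<forall>k<r. ds k \<alpha> = 0" and "r > 0"
  obtains K where "eventually (\<lambda>z. norm (f z) \<le> K * norm (z - \<alpha>) ^ r) (at \<alpha> within S)"
proof -
  have ds0: "\<And>z. z \<in> S \<Longrightarrow> ds 0 z = f z"
    and ds_deriv: "\<And>k z. k < r \<Longrightarrow> z \<in> S \<Longrightarrow> (ds k has_field_derivative ds (Suc k) z) (at z within S)"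
    using derivs unfolding higher_derivs_within_def by auto
  define K where "K = norm (ds r \<alpha>) + 1"
  have "((\<lambda>z. (ds (r - 1) z - ds (r - 1) \<alpha>) / (z - \<alpha>)) \<longlongrightarrow> ds r \<alpha>) (at \<alpha> within S)"
    using ds_deriv[of "r - 1" \<alpha>] \<open>r > 0\<close> \<open>\<alpha> \<in> S\<close> by (simp add: has_field_derivative_iff)
  then have "eventually (\<lambda>z. norm ((ds (r - 1) z - ds (r - 1) \<alpha>) / (z - \<alpha>)) < K) (at \<alpha> within S)"
    unfolding K_def by (intro order_tendstoD(2)[OF tendsto_norm]) auto
  then have "eventually (\<lambda>z. norm (ds (r - 1) z / (z - \<alpha>)) < K) (at \<alpha> within S)"
    using zero \<open>r > 0\<close> by simp
  then obtain \<delta> where "\<delta> > 0" and \<delta>: "\<And>z. z \<in> S \<Longrightarrow> z \<noteq> \<alpha> \<Longrightarrow> dist z \<alpha> < \<delta> \<Longrightarrow>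
      norm (ds (r - 1) z / (z - \<alpha>)) < K"
    unfolding eventually_at by blast
  define S' where "S' = S \<inter> ball \<alpha> \<delta>"
  have bound: "norm (f z) \<le> K * norm (z - \<alpha>) ^ r" if "z \<in> S'" for z
  proof -
    have "norm (ds 0 z) \<le> K * norm (z - \<alpha>) ^ (r - 0)"
    proof (rule norm_le_power_if_top_deriv_norm_le[where S = S' and k = 0 and ds = ds])
      show "convex S'" "\<alpha> \<in> S'" "K \<ge> 0"
        using \<open>convex S\<close> \<open>\<alpha> \<in> S\<close> \<open>\<delta> > 0\<close> by (auto simp: S'_def K_def convex_Int)
      show "(ds k has_field_derivative ds (Suc k) w) (at w within S')" if "k < r" "w \<in> S'" for k w
        using has_field_derivative_subset[OF ds_deriv[of k w]] that by (auto simp: S'_def)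
      show "norm (ds (r - 1) w) \<le> K * norm (w - \<alpha>)" if "w \<in> S'" for w
        using \<delta>[of w] zero \<open>r > 0\<close> that
        by (cases "w = \<alpha>") (auto simp: S'_def K_def dist_commute norm_divide divide_less_eq)
    qed (use \<open>r > 0\<close> that zero in auto)
    then show ?thesis
      using that ds0 by (simp add: S'_def)
  qed
  have "eventually (\<lambda>z. norm (f z) \<le> K * norm (z - \<alpha>) ^ r) (at \<alpha> within S)"
    using eventually_at_ball[OF \<open>\<delta> > 0\<close>, of \<alpha> S]
    by (rule eventually_mono) (use bound in \<open>simp add: S'_def\<close>)
  then show ?thesis
    by (rule that)
qed

lemma holomorphic_factor_lowest_nonzero_deriv:
  fixes P :: "complex \<Rightarrow> complex"
  assumes holo: "P holomorphic_on UNIV" and nonzero: "(deriv ^^ n) P \<alpha> \<noteq> 0"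
  obtains n0 g where "n0 \<le> n" "isCont g \<alpha>" "g \<alpha> \<noteq> 0"
    "eventually (\<lambda>z. P z = (z - \<alpha>) ^ n0 * g z) (at \<alpha>)"
proof -
  define n0 where "n0 = (LEAST n. (deriv ^^ n) P \<alpha> \<noteq> 0)"
  have n0: "(deriv ^^ n0) P \<alpha> \<noteq> 0"
    unfolding n0_def by (rule LeastI) (rule nonzero)
  have "n0 \<le> n"
    unfolding n0_def by (rule Least_le) (rule nonzero)
  have below: "\<And>i. i < n0 \<Longrightarrow> (deriv ^^ i) P \<alpha> = 0"
    unfolding n0_def using not_less_Least by blast
  show ?thesis
  proof (cases "n0 = 0")
    case True
    have "isCont P \<alpha>"
      using holomorphic_on_imp_differentiable_at[OF holo open_UNIV UNIV_I]
      by (rule field_differentiable_imp_continuous_at)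
    then show ?thesis
      by (rule that[OF \<open>n0 \<le> n\<close>]) (use n0 True in \<open>simp_all add: always_eventually\<close>)
  next
    case False
    obtain g \<rho> where "\<rho> > 0" and "g holomorphic_on ball \<alpha> \<rho>"
      and g: "\<And>w. w \<in> ball \<alpha> \<rho> \<Longrightarrow> P w - P \<alpha> = (w - \<alpha>) ^ n0 * g w"
      and g_nonzero: "\<And>w. w \<in> ball \<alpha> \<rho> \<Longrightarrow> g w \<noteq> 0"
      by (rule holomorphic_factor_order_of_zero[OF holo open_UNIV UNIV_I _ n0(1)])
        (use False below in auto)
    have "isCont g \<alpha>"
      using holomorphic_on_imp_differentiable_at[OF \<open>g holomorphic_on ball \<alpha> \<rho>\<close> open_ball] \<open>\<rho> > 0\<close>
      by (simp add: field_differentiable_imp_continuous_at)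
    moreover have "g \<alpha> \<noteq> 0"
      using g_nonzero \<open>\<rho> > 0\<close> by simp
    moreover have "P \<alpha> = 0"
      using below[of 0] False by simp
    then have "eventually (\<lambda>z. P z = (z - \<alpha>) ^ n0 * g z) (at \<alpha>)"
      using eventually_at_ball[OF \<open>\<rho> > 0\<close>, of \<alpha> UNIV]
    proof (rule_tac eventually_mono)
      show "P z = (z - \<alpha>) ^ n0 * g z" if "z \<in> ball \<alpha> \<rho> \<and> z \<in> UNIV" for z
        using g[of z] that \<open>P \<alpha> = 0\<close> by simp
    qed
    ultimately show ?thesis
      by (rule that[OF \<open>n0 \<le> n\<close>])
  qed
qed

lemma higher_deriv_eq_0_if_norm_le_power:
  fixes P :: "complex \<Rightarrow> complex"
  assumes "P holomorphic_on UNIV" and "\<alpha> islimpt S"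
    and bound: "eventually (\<lambda>z. norm (P z) \<le> K * norm (z - \<alpha>) ^ r) (at \<alpha> within S)"
    and "n < r"
  shows "(deriv ^^ n) P \<alpha> = 0"
proof (rule ccontr)
  assume "(deriv ^^ n) P \<alpha> \<noteq> 0"
  then obtain n0 g where "n0 < r" "isCont g \<alpha>" "g \<alpha> \<noteq> 0"
    and near: "eventually (\<lambda>z. P z = (z - \<alpha>) ^ n0 * g z) (at \<alpha>)"
    using holomorphic_factor_lowest_nonzero_deriv[OF \<open>P holomorphic_on UNIV\<close>] \<open>n < r\<close>
    by (metis order.strict_trans1)
  have factor: "eventually (\<lambda>z. P z = (z - \<alpha>) ^ n0 * g z) (at \<alpha> within S)"
    using filter_leD[OF at_le[OF subset_UNIV] near] .
  have g_bound: "eventually (\<lambda>z. norm (g z) \<le> K * norm (z - \<alpha>) ^ (r - n0)) (at \<alpha> within S)"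
    using eventually_conj[OF bound factor] eventually_at_ball'[OF zero_less_one, of \<alpha> S]
  proof eventually_elim
    case (elim z)
    obtain d where "r = n0 + d"
      using \<open>n0 < r\<close> less_imp_add_positive by blast
    then have split: "K * norm (z - \<alpha>) ^ r = norm (z - \<alpha>) ^ n0 * (K * norm (z - \<alpha>) ^ (r - n0))"
      by (simp add: power_add)
    have "norm (P z) = norm (z - \<alpha>) ^ n0 * norm (g z)"
      using elim by (simp add: norm_mult norm_power)
    with elim have "norm (z - \<alpha>) ^ n0 * norm (g z) \<le> norm (z - \<alpha>) ^ n0 * (K * norm (z - \<alpha>) ^ (r - n0))"
      unfolding split by simp
    then show ?case
      by (rule mult_left_le_imp_le) (use elim in simp)
  qed
  have lim_g: "((\<lambda>z. norm (g z)) \<longlongrightarrow> norm (g \<alpha>)) (at \<alpha> within S)"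
    using \<open>isCont g \<alpha>\<close> unfolding isCont_def
    by (rule tendsto_norm[OF tendsto_within_subset[OF _ subset_UNIV]])
  have lim_bound: "((\<lambda>z. K * norm (z - \<alpha>) ^ (r - n0)) \<longlongrightarrow> K * norm (\<alpha> - \<alpha>) ^ (r - n0)) (at \<alpha> within S)"
    by (intro tendsto_intros)
  have "at \<alpha> within S \<noteq> bot"
    using \<open>\<alpha> islimpt S\<close> by (simp add: trivial_limit_within)
  from tendsto_le[OF this lim_bound lim_g g_bound]
  have "norm (g \<alpha>) \<le> K * norm (\<alpha> - \<alpha>) ^ (r - n0)" .
  then show False
    using \<open>g \<alpha> \<noteq> 0\<close> \<open>n0 < r\<close> by (simp add: power_0_left)
qed

lemma higher_deriv_eq_0_if_dominated_by_root:
  fixes P Q f :: "complex \<Rightarrow> complex"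
  assumes "P holomorphic_on UNIV"
    and factor: "\<And>s. s \<noteq> 0 \<Longrightarrow> cmod s \<le> 1 \<Longrightarrow> (s - 1) * P s = s ^ m * Q s * f s"
    and Q_bound: "\<And>s. s \<noteq> 0 \<Longrightarrow> cmod s \<le> 1 \<Longrightarrow> cmod (Q s) \<le> 1"
    and "cmod \<alpha> \<le> 1" "\<alpha> \<noteq> 0" "\<alpha> \<noteq> 1"
    and "root_multiplicity_disc f \<alpha> r" and "n < r"
  shows "(deriv ^^ n) P \<alpha> = 0"
proof -
  obtain \<epsilon> ds where "\<epsilon> > 0" and derivs: "higher_derivs_within f (cball 0 1 \<inter> ball \<alpha> \<epsilon>) r ds"
    and zero: "\<forall>k<r. ds k \<alpha> = 0"
    using \<open>root_multiplicity_disc f \<alpha> r\<close> unfolding root_multiplicity_disc_def by blast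
  have disc: "at \<alpha> within cball 0 1 \<inter> ball \<alpha> \<epsilon> = at \<alpha> within cball 0 1"
    using \<open>\<epsilon> > 0\<close> by (intro at_within_nhd[of _ "ball \<alpha> \<epsilon>"]) auto
  obtain K where f_bound: "eventually (\<lambda>z. norm (f z) \<le> K * norm (z - \<alpha>) ^ r) (at \<alpha> within cball 0 1)"
    using higher_derivs_within_zero_imp_norm_le_power[OF derivs _ _ zero] \<open>\<epsilon> > 0\<close> \<open>cmod \<alpha> \<le> 1\<close> \<open>n < r\<close>
    unfolding disc by (auto simp: convex_Int)
  define B where "B = cmod (\<alpha> - 1)"
  have "B > 0"
    using \<open>\<alpha> \<noteq> 1\<close> by (simp add: B_def)
  have "((\<lambda>z. cmod (z - 1)) \<longlongrightarrow> B) (at \<alpha> within cball 0 1)"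
    unfolding B_def by (intro tendsto_intros)
  then have away_from_1: "eventually (\<lambda>z. B / 2 < cmod (z - 1)) (at \<alpha> within cball 0 1)"
    using \<open>B > 0\<close> by (intro order_tendstoD(1)) auto
  have away_from_0: "eventually (\<lambda>z. z \<noteq> 0) (at \<alpha> within cball 0 1)"
    using tendsto_imp_eventually_ne[OF tendsto_ident_at \<open>\<alpha> \<noteq> 0\<close>] .
  have "eventually (\<lambda>z. norm (P z) \<le> (2 * K / B) * norm (z - \<alpha>) ^ r) (at \<alpha> within cball 0 1)"
    using f_bound away_from_1 away_from_0 eventually_at_ball'[OF zero_less_one, of \<alpha> "cball 0 1"]
  proof eventually_elim
    case (elim z)
    then have "cmod (z - 1) * cmod (P z) = cmod z ^ m * cmod (Q z) * cmod (f z)"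
      using arg_cong[OF factor[of z], of norm] by (simp add: norm_mult norm_power)
    also have "\<dots> \<le> cmod (f z)"
      using elim Q_bound[of z] by (intro mult_left_le_one_le mult_le_one power_le_one) auto
    finally have "cmod (z - 1) * cmod (P z) \<le> K * cmod (z - \<alpha>) ^ r"
      using elim by linarith
    moreover have "B / 2 * cmod (P z) \<le> cmod (z - 1) * cmod (P z)"
      using elim by (intro mult_right_mono) auto
    ultimately have "B / 2 * cmod (P z) \<le> K * cmod (z - \<alpha>) ^ r"
      by linarith
    then show ?case
      using \<open>B > 0\<close> by (simp add: field_simps)
  qed
  moreover have "\<alpha> islimpt cball 0 1"
    using \<open>cmod \<alpha> \<le> 1\<close> islimpt_ball[of \<alpha> 0 1] islimpt_subset[OF _ ball_subset_cball] by simp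
  ultimately show ?thesis
    using higher_deriv_eq_0_if_norm_le_power[OF \<open>P holomorphic_on UNIV\<close>] \<open>n < r\<close> by blast
qed

section \<open>Suprema of partial sums, independence and generating functions\<close>

lemma SUP_ereal_Ints_cases:
  fixes g :: "'i \<Rightarrow> real"
  assumes "A \<noteq> {}" and Ints: "\<And>n. n \<in> A \<Longrightarrow> g n \<in> \<int>"
  obtains "(SUP n\<in>A. ereal (g n)) = \<infinity>" | k :: int where "(SUP n\<in>A. ereal (g n)) = ereal (of_int k)"
proof (cases "(SUP n\<in>A. ereal (g n)) = \<infinity>")
  case False
  obtain n0 where "n0 \<in> A"
    using \<open>A \<noteq> {}\<close> by blast
  then have "ereal (g n0) \<le> (SUP n\<in>A. ereal (g n))"
    by (rule SUP_upper)
  with False obtain r where r: "(SUP n\<in>A. ereal (g n)) = ereal r"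
    by (cases "SUP n\<in>A. ereal (g n)") auto
  then obtain n where "n \<in> A" and n: "r - 1 < g n"
    using less_SUP_iff[of "ereal (r - 1)" "\<lambda>n. ereal (g n)" A] by auto
  have "g j \<le> g n" if "j \<in> A" for j
  proof -
    have "g j \<le> r"
      using SUP_upper[OF that, of "\<lambda>n. ereal (g n)"] r by simp
    moreover obtain a b where "g j = of_int a" "g n = of_int b"
      using Ints \<open>j \<in> A\<close> \<open>n \<in> A\<close> by (meson Ints_cases)
    ultimately show ?thesis
      using n by simp
  qed
  then have "(SUP n\<in>A. ereal (g n)) = ereal (g n)"
    using \<open>n \<in> A\<close> by (intro antisym SUP_least SUP_upper) auto
  moreover obtain k where "g n = of_int k"
    using Ints \<open>n \<in> A\<close> by (meson Ints_cases)
  ultimately show ?thesis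
    using that(2) by simp
qed (rule that(1))

lemma SUP_partial_sums_shift:
  fixes a :: "nat \<Rightarrow> real"
  shows "(SUP n\<in>{1..}. ereal (\<Sum>i<n. a i)) =
    ereal (a 0) + max 0 (SUP n\<in>{1..}. ereal (\<Sum>i<n. a (Suc i)))"
proof -
  have shift: "{1..} = range Suc"
    by (auto dest: Suc_le_D)
  have all: "UNIV = insert 0 {1 :: nat..}"
    by auto
  have tail: "(SUP n. ereal (\<Sum>i<n. a (Suc i))) = max 0 (SUP n\<in>{1..}. ereal (\<Sum>i<n. a (Suc i)))"
    unfolding all by (simp add: sup_max flip: zero_ereal_def)
  have "(SUP n\<in>{1..}. ereal (\<Sum>i<n. a i)) = (SUP n. ereal (a 0) + ereal (\<Sum>i<n. a (Suc i)))"
    unfolding shift by (simp add: image_comp sum.lessThan_Suc_shift del: sum.lessThan_Suc)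
  also have "\<dots> = ereal (a 0) + (SUP n. ereal (\<Sum>i<n. a (Suc i)))"
    by (rule SUP_ereal_add_right) auto
  finally show ?thesis
    unfolding tail .
qed

lemma (in prob_space) indep_vars_reindex:
  assumes indep: "indep_vars M' X I" and "inj_on f J" and "f ` J \<subseteq> I"
  shows "indep_vars (\<lambda>j. M' (f j)) (\<lambda>j. X (f j)) J"
proof -
  define G where "G i = sigma_sets (space M) {X i -` A \<inter> space M |A. A \<in> sets (M' i)}" for i
  have rv: "\<forall>i\<in>I. random_variable (M' i) (X i)" and "indep_sets G I"
    using indep unfolding indep_vars_def G_def by auto
  have "indep_sets (\<lambda>j. G (f j)) J"
    unfolding indep_sets_def
  proof (intro conjI ballI allI impI)
    fix j assume "j \<in> J"
    then show "G (f j) \<subseteq> events"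
      using \<open>indep_sets G I\<close> \<open>f ` J \<subseteq> I\<close> unfolding indep_sets_def by auto
  next
    fix K A assume K: "K \<subseteq> J" "K \<noteq> {}" "finite K" and A: "A \<in> Pi K (\<lambda>j. G (f j))"
    have "inj_on f K"
      using \<open>inj_on f J\<close> K(1) by (rule inj_on_subset)
    define A' where "A' i = A (the_inv_into K f i)" for i
    have A': "A' (f j) = A j" if "j \<in> K" for j
      unfolding A'_def using the_inv_into_f_f[OF \<open>inj_on f K\<close> that] by simp
    have "prob (\<Inter>i\<in>f ` K. A' i) = (\<Prod>i\<in>f ` K. prob (A' i))"
      using K \<open>f ` J \<subseteq> I\<close> A A' by (intro indep_setsD[OF \<open>indep_sets G I\<close>]) auto
    then show "prob (\<Inter>j\<in>K. A j) = (\<Prod>j\<in>K. prob (A j))"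
      using A' by (simp add: prod.reindex[OF \<open>inj_on f K\<close>])
  qed
  then show ?thesis
    unfolding indep_vars_def G_def using rv \<open>f ` J \<subseteq> I\<close> by auto
qed

lemma (in prob_space) integral_indep_var_mult_bounded:
  fixes u v :: "_ \<Rightarrow> complex"
  assumes indep: "indep_var N1 Y1 N2 Y2"
    and [measurable]: "u \<in> borel_measurable N1" "v \<in> borel_measurable N2"
    and "\<And>\<omega>. \<omega> \<in> space M \<Longrightarrow> norm (u (Y1 \<omega>)) \<le> Cu"
    and "\<And>\<omega>. \<omega> \<in> space M \<Longrightarrow> norm (v (Y2 \<omega>)) \<le> Cv"
  shows "(\<integral>\<omega>. u (Y1 \<omega>) * v (Y2 \<omega>) \<partial>M) = (\<integral>\<omega>. u (Y1 \<omega>) \<partial>M) * (\<integral>\<omega>. v (Y2 \<omega>) \<partial>M)"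
proof -
  have [measurable]: "Y1 \<in> measurable M N1" "Y2 \<in> measurable M N2"
    using indep_var_rv1[OF indep] indep_var_rv2[OF indep] by auto
  have "integrable M (u \<circ> Y1)"
    using assms(4) by (intro integrable_const_bound[where B = Cu]) auto
  moreover have "integrable M (v \<circ> Y2)"
    using assms(5) by (intro integrable_const_bound[where B = Cv]) auto
  moreover have "indep_var borel (u \<circ> Y1) borel (v \<circ> Y2)"
    by (rule indep_var_compose[OF indep]) simp_all
  ultimately have "(\<integral>\<omega>. (u \<circ> Y1) \<omega> * (v \<circ> Y2) \<omega> \<partial>M) = (\<integral>\<omega>. (u \<circ> Y1) \<omega> \<partial>M) * (\<integral>\<omega>. (v \<circ> Y2) \<omega> \<partial>M)"
    by (intro indep_var_lebesgue_integral)
  then show ?thesis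
    by (simp add: comp_def)
qed

lemma (in prob_space) pgf_sums_integral:
  fixes g :: "'a \<Rightarrow> nat" and z :: complex
  assumes [measurable]: "g \<in> measurable M (count_space UNIV)"
    and summable: "summable (\<lambda>k. prob {\<omega>\<in>space M. g \<omega> = k} * cmod z ^ k)"
  shows "(\<lambda>k. complex_of_real (prob {\<omega>\<in>space M. g \<omega> = k}) * z ^ k) sums (\<integral>\<omega>. z ^ g \<omega> \<partial>M)"
proof -
  define f where "f k \<omega> = complex_of_real (indicator {\<omega>\<in>space M. g \<omega> = k} \<omega>) * z ^ k" for k \<omega>
  have [measurable]: "{\<omega>\<in>space M. g \<omega> = k} \<in> events" for k
    by measurable
  have integrable: "integrable M (f k)" for k
    unfolding f_def by (intro integrable_mult_left integrable_of_real integrable_real_indicator) (auto simp: less_top[symmetric])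
  have single: "f k \<omega> = 0" if "k \<noteq> g \<omega>" for k \<omega>
    using that unfolding f_def by (auto split: split_indicator)
  have "(\<lambda>k. integral\<^sup>L M (f k)) sums (\<integral>\<omega>. (\<Sum>k. f k \<omega>) \<partial>M)"
  proof (rule sums_integral[OF integrable])
    show "AE x in M. summable (\<lambda>i. norm (f i x))"
    proof (rule AE_I2)
      show "summable (\<lambda>i. norm (f i x))" for x
        by (rule summable_finite[of "{g x}"]) (auto simp: single)
    qed
    have "(\<integral>x. norm (f i x) \<partial>M) = prob {\<omega>\<in>space M. g \<omega> = i} * cmod z ^ i" for i
      unfolding f_def by (simp add: norm_mult norm_power)
    then show "summable (\<lambda>i. \<integral>x. norm (f i x) \<partial>M)"
      using summable by simp
  qed
  moreover have "(\<Sum>k. f k \<omega>) = z ^ g \<omega>" if "\<omega> \<in> space M" for \<omega>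
    using suminf_finite[of "{g \<omega>}" "\<lambda>k. f k \<omega>"] that by (simp add: single f_def)
  ultimately show ?thesis
    unfolding f_def by (simp cong: Bochner_Integration.integral_cong)
qed

lemma telescope_powers_from:
  fixes s :: complex
  shows "(s - 1) * (\<Sum>j<k. if t \<le> j then s ^ (i + j) else 0) =
    (if t < k then s ^ (i + k) - s ^ (i + t) else 0)"
proof (induction k)
  case (Suc k)
  have step: "(s - 1) * s ^ (i + k) = s ^ (i + Suc k) - s ^ (i + k)"
    by (simp add: algebra_simps)
  consider "t < k" | "t = k" | "k < t"
    by linarith
  then show ?case
    using Suc step by cases (simp_all add: algebra_simps)
qed simp

lemma norm_sum_indicator_powers_le:
  fixes s :: complex
  assumes "cmod s \<le> 1"
  shows "cmod (\<Sum>j<k. if t \<le> j then s ^ (i + j) else 0) \<le> k"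
proof -
  have "cmod (\<Sum>j<k. if t \<le> j then s ^ (i + j) else 0) \<le> (\<Sum>j<k. 1)"
    by (rule sum_norm_le) (use assms in \<open>auto simp: norm_power power_le_one\<close>)
  then show ?thesis
    by simp
qed

lemma power_pos_part_expansion:
  fixes s :: complex and x i n m :: nat
  assumes "s \<noteq> 0" and "n \<le> m"
  shows "s ^ m * s ^ nat (int x + int i - int n) = s ^ m * (s ^ i * (s ^ x * (1 / s) ^ n))
    + (if i < m then (s - 1) * (\<Sum>j<m - i. if x + (m - n) \<le> j then s ^ (i + j) else 0) else 0)"
proof -
  have "s ^ m * (s ^ i * (s ^ x * (1 / s) ^ n)) = s ^ (i + (x + (m - n))) * (s ^ n * (1 / s) ^ n)"
    using \<open>n \<le> m\<close> by (simp add: algebra_simps flip: power_add)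
  also have "s ^ n * (1 / s) ^ n = 1"
    using \<open>s \<noteq> 0\<close> by (simp add: field_simps)
  finally have shifted: "s ^ m * (s ^ i * (s ^ x * (1 / s) ^ n)) = s ^ (i + (x + (m - n)))"
    by simp
  have telescope: "(s - 1) * (\<Sum>j<m - i. if x + (m - n) \<le> j then s ^ (i + j) else 0) =
      (if x + (m - n) < m - i then s ^ (i + (m - i)) - s ^ (i + (x + (m - n))) else 0)"
    by (rule telescope_powers_from)
  show ?thesis
  proof (cases "n \<le> x + i")
    case True
    then have "m + nat (int x + int i - int n) = i + (x + (m - n))"
      using \<open>n \<le> m\<close> by auto
    moreover have "\<not> x + (m - n) < m - i"
      using True by linarith
    ultimately show ?thesis
      using shifted telescope by (simp flip: power_add)
  next
    case False
    then have "i < m" and below: "x + (m - n) < m - i"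
      using \<open>n \<le> m\<close> by auto
    have "s ^ m * s ^ nat (int x + int i - int n) = s ^ m"
      using False by simp
    moreover have "(s - 1) * (\<Sum>j<m - i. if x + (m - n) \<le> j then s ^ (i + j) else 0) =
        s ^ m - s ^ (i + (x + (m - n)))"
      using telescope below \<open>i < m\<close> by simp
    ultimately show ?thesis
      using shifted \<open>i < m\<close> by simp
  qed
qed

section \<open>The walk of claims and premiums\<close>

definition path_sup :: "real \<Rightarrow> (nat + nat \<Rightarrow> real) \<Rightarrow> ereal" where
  "path_sup c z = max 0 (SUP n\<in>{1..}. ereal (\<Sum>i<n. z (Inl i) - c * z (Inr i)))"

lemma path_sup_measurable[measurable]: "path_sup c \<in> borel_measurable (PiM UNIV (\<lambda>_. borel))"
  unfolding path_sup_def by measurable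

text \<open>
  \<open>s\<^sup>\<infinity>\<close> is taken to be \<open>0\<close>.
\<close>
definition power_ereal :: "complex \<Rightarrow> ereal \<Rightarrow> complex" where
  "power_ereal s e = (if e = \<infinity> then 0 else s ^ nat \<lfloor>real_of_ereal e\<rfloor>)"

lemma power_ereal_measurable[measurable]: "power_ereal s \<in> borel_measurable borel"
  unfolding power_ereal_def by measurable

lemma norm_power_ereal_le_1: "cmod s \<le> 1 \<Longrightarrow> cmod (power_ereal s e) \<le> 1"
  unfolding power_ereal_def by (auto simp: norm_power power_le_one)

locale discrete_risk_walk = prob_space M for M :: "'a measure" +
  fixes X :: "nat \<Rightarrow> 'a \<Rightarrow> nat" and \<theta> :: "nat \<Rightarrow> 'a \<Rightarrow> real" and c :: real and m :: nat
  assumes X_measurable[measurable]: "\<And>i. X i \<in> measurable M (count_space UNIV)"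
    and \<theta>_measurable[measurable]: "\<And>i. \<theta> i \<in> borel_measurable M"
    and premium_Nats: "\<And>i \<omega>. \<omega> \<in> space M \<Longrightarrow> c * \<theta> i \<omega> \<in> \<nat>"
    and indep: "indep_vars (\<lambda>_. borel) (\<lambda>k \<omega>. case k of Inl i \<Rightarrow> real (X i \<omega>) | Inr i \<Rightarrow> \<theta> i \<omega>) UNIV"
    and X_distr: "\<And>i. distr M (count_space UNIV) (X i) = distr M (count_space UNIV) (X 0)"
    and \<theta>_distr: "\<And>i. distr M borel (\<theta> i) = distr M borel (\<theta> 0)"
    and premium_le: "measure M {\<omega> \<in> space M. c * \<theta> 0 \<omega> \<le> real m} = 1"
begin

definition family :: "nat + nat \<Rightarrow> 'a \<Rightarrow> real" where
  "family k \<omega> = (case k of Inl i \<Rightarrow> real (X i \<omega>) | Inr i \<Rightarrow> \<theta> i \<omega>)"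

definition tail_sup :: "'a \<Rightarrow> ereal" where
  "tail_sup \<omega> = path_sup c (\<lambda>k. family (map_sum Suc Suc k) \<omega>)"

text \<open>\<open>premium\<close> agrees with \<open>c \<theta>\<^sub>0\<close> almost surely; the truncation makes it bounded everywhere.\<close>
definition premium :: "'a \<Rightarrow> nat" where
  "premium \<omega> = min m (nat \<lfloor>c * \<theta> 0 \<omega>\<rfloor>)"

lemma indep_family: "indep_vars (\<lambda>_. borel) family UNIV"
  using indep unfolding family_def[abs_def] .

lemma family_measurable[measurable]: "family k \<in> borel_measurable M"
  using indep_family unfolding indep_vars_def by auto

lemma premium_measurable[measurable]: "premium \<in> measurable M (count_space UNIV)"
  unfolding premium_def by measurable

lemma X_borel_measurable[measurable]: "X i \<in> borel_measurable M"
  by (simp add: measurable_cong_sets[OF refl sets_borel_eq_count_space])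

lemma premium_borel_measurable[measurable]: "premium \<in> borel_measurable M"
  by (simp add: measurable_cong_sets[OF refl sets_borel_eq_count_space])

lemma walk_sup_eq_path_sup: "walk_sup X c \<theta> \<omega> = path_sup c (\<lambda>k. family k \<omega>)"
  unfolding walk_sup_def path_sup_def family_def by simp

lemma distr_family_eq_first:
  "distr M borel (family k) = distr M borel (family (map_sum (\<lambda>_. 0) (\<lambda>_. 0) k))"
proof (cases k)
  case (Inl i)
  have "family (Inl j) = real \<circ> X j" for j
    by (auto simp: family_def)
  moreover have "distr M borel (real \<circ> X i) = distr (distr M (count_space UNIV) (X i)) borel real"
    for i by (simp add: distr_distr)
  ultimately show ?thesis
    using Inl X_distr[of i] by simp
next
  case (Inr i)
  have "family (Inr j) = \<theta> j" for j
    by (auto simp: family_def)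
  then show ?thesis
    using Inr \<theta>_distr[of i] by simp
qed

lemma distr_family_shift:
  "distr M (PiM UNIV (\<lambda>_. borel)) (\<lambda>\<omega>. \<lambda>k\<in>UNIV. family (map_sum Suc Suc k) \<omega>) =
    distr M (PiM UNIV (\<lambda>_. borel)) (\<lambda>\<omega>. \<lambda>k\<in>UNIV. family k \<omega>)"
proof -
  have "inj (map_sum Suc Suc :: nat + nat \<Rightarrow> _)"
  proof (rule injI)
    show "x = y" if "map_sum Suc Suc x = map_sum Suc Suc y" for x y :: "nat + nat"
      using that by (cases x; cases y) auto
  qed
  then have "indep_vars (\<lambda>_. borel) (\<lambda>k. family (map_sum Suc Suc k)) UNIV"
    using indep_vars_reindex[OF indep_family] by simp
  then have "distr M (PiM UNIV (\<lambda>_. borel)) (\<lambda>\<omega>. \<lambda>k\<in>UNIV. family (map_sum Suc Suc k) \<omega>) =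
      PiM UNIV (\<lambda>k. distr M borel (family (map_sum Suc Suc k)))"
    by (subst (asm) indep_vars_iff_distr_eq_PiM) auto
  also have "\<dots> = PiM UNIV (\<lambda>k. distr M borel (family k))"
  proof (rule PiM_cong)
    fix k :: "nat + nat"
    show "distr M borel (family (map_sum Suc Suc k)) = distr M borel (family k)"
    proof -
      have "map_sum (\<lambda>_. 0) (\<lambda>_. 0) (map_sum Suc Suc k) = map_sum (\<lambda>_. 0 :: nat) (\<lambda>_. 0 :: nat) k"
        by (cases k) simp_all
      then show ?thesis
        unfolding distr_family_eq_first[of "map_sum Suc Suc k"] distr_family_eq_first[of k] by simp
    qed
  qed simp
  also have "\<dots> = distr M (PiM UNIV (\<lambda>_. borel)) (\<lambda>\<omega>. \<lambda>k\<in>UNIV. family k \<omega>)"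
    using indep_family by (subst (asm) indep_vars_iff_distr_eq_PiM) auto
  finally show ?thesis .
qed

lemma walk_sup_first_step:
  "walk_sup X c \<theta> \<omega> = max 0 (ereal (real (X 0 \<omega>) - c * \<theta> 0 \<omega>) + tail_sup \<omega>)"
  using SUP_partial_sums_shift[of "\<lambda>i. real (X i \<omega>) - c * \<theta> i \<omega>"]
  unfolding walk_sup_def tail_sup_def path_sup_def family_def by simp

lemma tail_sup_cases:
  assumes "\<omega> \<in> space M"
  obtains "tail_sup \<omega> = \<infinity>" | i :: nat where "tail_sup \<omega> = ereal (real i)"
proof -
  define g where "g n = (\<Sum>i<n. real (X (Suc i) \<omega>) - c * \<theta> (Suc i) \<omega>)" for n
  have Ints: "g n \<in> \<int>" if "n \<in> {1..}" for n
    unfolding g_def using premium_Nats[OF assms] by (intro Ints_sum Ints_diff) (auto intro: Nats_subset_Ints[THEN subsetD])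
  have tail_sup: "tail_sup \<omega> = max 0 (SUP n\<in>{1..}. ereal (g n))"
    unfolding tail_sup_def path_sup_def family_def g_def by simp
  show ?thesis
  proof (rule SUP_ereal_Ints_cases[OF _ Ints])
    assume "(SUP n\<in>{1..}. ereal (g n)) = \<infinity>"
    then show ?thesis
      using tail_sup that(1) by simp
  next
    fix k :: int assume "(SUP n\<in>{1..}. ereal (g n)) = ereal (of_int k)"
    then have "tail_sup \<omega> = ereal (real (nat k))"
      using tail_sup by (simp add: max_def)
    then show ?thesis
      by (rule that(2))
  qed auto
qed

lemma family_paths_measurable[measurable]:
  "(\<lambda>\<omega>. \<lambda>k\<in>UNIV. family (map_sum Suc Suc k) \<omega>) \<in> M \<rightarrow>\<^sub>M PiM UNIV (\<lambda>_. borel)"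
  "(\<lambda>\<omega>. \<lambda>k\<in>UNIV. family k \<omega>) \<in> M \<rightarrow>\<^sub>M PiM UNIV (\<lambda>_. borel)"
  by (auto intro!: measurable_restrict)

lemma tail_sup_eq_comp: "tail_sup = path_sup c \<circ> (\<lambda>\<omega>. \<lambda>k\<in>UNIV. family (map_sum Suc Suc k) \<omega>)"
  by (auto simp: tail_sup_def restrict_UNIV)

lemma tail_sup_measurable[measurable]: "tail_sup \<in> borel_measurable M"
  unfolding tail_sup_eq_comp by measurable

lemma walk_sup_eq_comp: "walk_sup X c \<theta> = path_sup c \<circ> (\<lambda>\<omega>. \<lambda>k\<in>UNIV. family k \<omega>)"
  by (auto simp: walk_sup_eq_path_sup restrict_UNIV)

lemma walk_sup_measurable[measurable]: "walk_sup X c \<theta> \<in> borel_measurable M"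
  unfolding walk_sup_eq_comp by measurable

lemma distr_tail_sup: "distr M borel tail_sup = distr M borel (walk_sup X c \<theta>)"
proof -
  have "distr M borel tail_sup =
      distr (distr M (PiM UNIV (\<lambda>_. borel)) (\<lambda>\<omega>. \<lambda>k\<in>UNIV. family (map_sum Suc Suc k) \<omega>)) borel (path_sup c)"
    unfolding tail_sup_eq_comp by (simp add: distr_distr)
  also have "\<dots> = distr (distr M (PiM UNIV (\<lambda>_. borel)) (\<lambda>\<omega>. \<lambda>k\<in>UNIV. family k \<omega>)) borel (path_sup c)"
    unfolding distr_family_shift ..
  also have "\<dots> = distr M borel (walk_sup X c \<theta>)"
    unfolding walk_sup_eq_comp by (simp add: distr_distr)
  finally show ?thesis .
qed

lemma integral_tail_sup:
  fixes h :: "ereal \<Rightarrow> complex"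
  assumes [measurable]: "h \<in> borel_measurable borel"
  shows "(\<integral>\<omega>. h (tail_sup \<omega>) \<partial>M) = (\<integral>\<omega>. h (walk_sup X c \<theta> \<omega>) \<partial>M)"
  using integral_distr[of tail_sup M borel h] integral_distr[of "walk_sup X c \<theta>" M borel h]
  by (simp add: distr_tail_sup)

lemma integral_first_step_tail_sup_mult:
  fixes u :: "nat \<times> nat \<Rightarrow> complex" and v :: "ereal \<Rightarrow> complex"
  assumes [measurable]: "v \<in> borel_measurable borel"
    and "\<And>\<omega>. \<omega> \<in> space M \<Longrightarrow> norm (u (X 0 \<omega>, premium \<omega>)) \<le> Cu"
    and "\<And>e. norm (v e) \<le> Cv"
  shows "(\<integral>\<omega>. u (X 0 \<omega>, premium \<omega>) * v (tail_sup \<omega>) \<partial>M) =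
    (\<integral>\<omega>. u (X 0 \<omega>, premium \<omega>) \<partial>M) * (\<integral>\<omega>. v (tail_sup \<omega>) \<partial>M)"
proof -
  define first where "first y = (nat \<lfloor>y (Inl 0) :: real\<rfloor>, min m (nat \<lfloor>c * y (Inr 0)\<rfloor>))" for y :: "nat + nat \<Rightarrow> real"
  define sup_of where "sup_of y = path_sup c (\<lambda>k. y (map_sum Suc Suc k))" for y :: "nat + nat \<Rightarrow> real"
  define head where "head \<omega> = (\<lambda>k\<in>{Inl 0, Inr 0}. family k \<omega>)" for \<omega>
  define tail where "tail \<omega> = (\<lambda>k\<in>range (map_sum Suc Suc). family k \<omega>)" for \<omega>
  have "{Inl 0, Inr 0} \<inter> range (map_sum Suc Suc) = ({} :: (nat + nat) set)"
  proof (intro equalityI subsetI)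
    fix x assume "x \<in> {Inl 0, Inr 0} \<inter> range (map_sum Suc Suc)"
    then obtain k where "x = map_sum Suc Suc k" "x \<in> {Inl 0, Inr 0}"
      by blast
    then show "x \<in> {}"
      by (cases k) auto
  qed simp
  then have "indep_var (PiM {Inl 0, Inr 0} (\<lambda>_. borel)) head (PiM (range (map_sum Suc Suc)) (\<lambda>_. borel)) tail"
    unfolding head_def tail_def by (rule indep_var_restrict[OF indep_family]) auto
  moreover have "(\<lambda>y. u (first y)) \<in> borel_measurable (PiM {Inl 0, Inr 0} (\<lambda>_. borel))"
    unfolding first_def by measurable
  moreover have "(\<lambda>y. v (sup_of y)) \<in> borel_measurable (PiM (range (map_sum Suc Suc)) (\<lambda>_. borel))"
  proof -
    have "(\<lambda>y. \<lambda>k\<in>UNIV. y (map_sum Suc Suc k)) \<in>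
        PiM (range (map_sum Suc Suc)) (\<lambda>_. borel) \<rightarrow>\<^sub>M PiM UNIV (\<lambda>_. borel :: real measure)"
      by (auto intro!: measurable_restrict measurable_component_singleton)
    from measurable_compose[OF this path_sup_measurable] show ?thesis
      by (simp add: sup_of_def restrict_UNIV)
  qed
  moreover have "first (head \<omega>) = (X 0 \<omega>, premium \<omega>)" "sup_of (tail \<omega>) = tail_sup \<omega>" for \<omega>
    by (simp_all add: first_def head_def family_def premium_def sup_of_def tail_def tail_sup_def)
  ultimately show ?thesis
    using integral_indep_var_mult_bounded[of _ head _ tail "\<lambda>y. u (first y)" "\<lambda>y. v (sup_of y)" Cu Cv] assms(2,3)
    by simp
qed

lemma indep_claim_premium: "indep_var (count_space UNIV) (X 0) (count_space UNIV) premium"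
proof -
  have "indep_var (PiM {Inl 0} (\<lambda>_. borel)) (\<lambda>\<omega>. \<lambda>k\<in>{Inl 0}. family k \<omega>)
      (PiM {Inr 0} (\<lambda>_. borel)) (\<lambda>\<omega>. \<lambda>k\<in>{Inr 0}. family k \<omega>)"
    by (rule indep_var_restrict[OF indep_family]) auto
  then have "indep_var (count_space UNIV) ((\<lambda>y. nat \<lfloor>y (Inl 0) :: real\<rfloor>) \<circ> (\<lambda>\<omega>. \<lambda>k\<in>{Inl 0}. family k \<omega>))
      (count_space UNIV) ((\<lambda>y. min m (nat \<lfloor>c * y (Inr 0)\<rfloor>)) \<circ> (\<lambda>\<omega>. \<lambda>k\<in>{Inr 0}. family k \<omega>))"
    by (rule indep_var_compose) measurable
  moreover have "(\<lambda>y. nat \<lfloor>y (Inl 0) :: real\<rfloor>) \<circ> (\<lambda>\<omega>. \<lambda>k\<in>{Inl 0}. family k \<omega>) = X 0"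
    "(\<lambda>y. min m (nat \<lfloor>c * y (Inr 0)\<rfloor>)) \<circ> (\<lambda>\<omega>. \<lambda>k\<in>{Inr 0}. family k \<omega>) = premium"
    by (auto simp: family_def premium_def)
  ultimately show ?thesis
    by simp
qed

lemma premium_le_m: "premium \<omega> \<le> m"
  by (simp add: premium_def)

lemma AE_premium: "AE \<omega> in M. c * \<theta> 0 \<omega> = real (premium \<omega>)"
proof -
  have "AE \<omega> in M. c * \<theta> 0 \<omega> \<le> real m"
    using AE_prob_1[OF premium_le] by simp
  then show ?thesis
  proof (rule AE_mp[OF _ AE_I2[OF impI]])
    fix \<omega> assume "\<omega> \<in> space M" and "c * \<theta> 0 \<omega> \<le> real m"
    moreover obtain n where "c * \<theta> 0 \<omega> = real n"
      using premium_Nats[OF \<open>\<omega> \<in> space M\<close>, of 0] by (auto elim: Nats_cases)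
    ultimately show "c * \<theta> 0 \<omega> = real (premium \<omega>)"
      unfolding premium_def by simp
  qed
qed

lemma integral_power_claim:
  assumes "cmod s \<le> 1"
  shows "(\<integral>\<omega>. s ^ X 0 \<omega> \<partial>M) = pgf M (\<lambda>\<omega>. real (X 0 \<omega>)) s"
proof -
  have "(\<lambda>k. prob {\<omega>\<in>space M. X 0 \<omega> = k}) sums prob {\<omega>\<in>space M. True}"
    by (rule prob_sums) auto
  then have "summable (\<lambda>k. prob {\<omega>\<in>space M. X 0 \<omega> = k} * cmod s ^ k)"
    using assms by (intro summable_comparison_test_ev[OF _ sums_summable] always_eventually)
      (auto intro!: mult_left_le power_le_one)
  from sums_unique[OF pgf_sums_integral[OF X_measurable this]] show ?thesis
    by (simp add: pgf_def)
qed

lemma integral_power_premium: "(\<integral>\<omega>. z ^ premium \<omega> \<partial>M) = pgf M (\<lambda>\<omega>. c * \<theta> 0 \<omega>) z"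
proof -
  have "summable (\<lambda>k. prob {\<omega>\<in>space M. premium \<omega> = k} * cmod z ^ k)"
  proof (rule summable_finite[of "{..m}"])
    fix k assume "k \<notin> {..m}"
    then have empty: "{\<omega>\<in>space M. premium \<omega> = k} = {}"
      by (auto simp: premium_def)
    show "prob {\<omega>\<in>space M. premium \<omega> = k} * cmod z ^ k = 0"
      unfolding empty by simp
  qed simp
  moreover have "prob {\<omega>\<in>space M. c * \<theta> 0 \<omega> = real k} = prob {\<omega>\<in>space M. premium \<omega> = k}" for k
    using AE_premium by (intro prob_eq_AE) (auto elim: AE_mp)
  ultimately show ?thesis
    using sums_unique[OF pgf_sums_integral[OF premium_measurable]] by (simp add: pgf_def)
qed

lemma power_ereal_of_nat[simp]: "power_ereal s (ereal (real k)) = s ^ k"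
  by (simp add: power_ereal_def)

definition step_power :: "complex \<Rightarrow> 'a \<Rightarrow> complex" where
  "step_power s \<omega> = s ^ X 0 \<omega> * (1 / s) ^ premium \<omega>"

text \<open>
  With \<open>t = X\<^sub>0 + m - c\<theta>\<^sub>0\<close> this is \<open>s\<^sup>m - s\<^bsup>i+t\<^esup>\<close> if \<open>i + t < m\<close> and \<open>0\<close> otherwise:
  the effect of the positive part in \<open>M = max 0 (X\<^sub>0 - c\<theta>\<^sub>0 + M')\<close> on \<open>s\<^bsup>m+M\<^esup>\<close> when \<open>M' = i\<close>.
\<close>
definition truncation_correction :: "complex \<Rightarrow> nat \<Rightarrow> 'a \<Rightarrow> complex" where
  "truncation_correction s i \<omega> =
    (s - 1) * (\<Sum>j<m - i. if X 0 \<omega> + (m - premium \<omega>) \<le> j then s ^ (i + j) else 0)"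

lemma step_power_measurable[measurable]: "step_power s \<in> borel_measurable M"
  unfolding step_power_def by measurable

lemma truncation_correction_measurable[measurable]: "truncation_correction s i \<in> borel_measurable M"
  unfolding truncation_correction_def by measurable

lemma power_walk_sup_expansion:
  assumes "s \<noteq> 0" and "\<omega> \<in> space M" and premium: "c * \<theta> 0 \<omega> = real (premium \<omega>)"
  shows "s ^ m * power_ereal s (walk_sup X c \<theta> \<omega>) =
    s ^ m * (step_power s \<omega> * power_ereal s (tail_sup \<omega>)) +
    (\<Sum>i<m. truncation_correction s i \<omega> * indicator {ereal (real i)} (tail_sup \<omega>))"
proof -
  have walk: "walk_sup X c \<theta> \<omega> = max 0 (ereal (real (X 0 \<omega>) - real (premium \<omega>)) + tail_sup \<omega>)"
    unfolding walk_sup_first_step premium ..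
  show ?thesis
  proof (cases rule: tail_sup_cases[OF \<open>\<omega> \<in> space M\<close>])
    case 1
    then show ?thesis
      using walk by (simp add: power_ereal_def)
  next
    case (2 i)
    have "walk_sup X c \<theta> \<omega> = ereal (real (nat (int (X 0 \<omega>) + int i - int (premium \<omega>))))"
      using walk 2 by (simp add: max_def)
    moreover have "(\<Sum>i'<m. a i' * indicator {ereal (real i')} (ereal (real i))) = (if i < m then a i else 0)"
      for a :: "nat \<Rightarrow> complex"
      by (simp add: indicator_def sum.delta)
    ultimately show ?thesis
      using 2 power_pos_part_expansion[OF \<open>s \<noteq> 0\<close> premium_le_m]
      by (simp add: step_power_def truncation_correction_def mult.commute)
  qed
qed

lemma norm_inverse_power_premium_le:
  assumes "s \<noteq> 0" and "cmod s \<le> 1"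
  shows "cmod ((1 / s) ^ premium \<omega>) \<le> (1 / cmod s) ^ m"
  using assms premium_le_m[of \<omega>] by (auto simp: norm_power norm_divide intro!: power_increasing)

lemma norm_step_power_le:
  assumes "s \<noteq> 0" and "cmod s \<le> 1"
  shows "cmod (step_power s \<omega>) \<le> (1 / cmod s) ^ m"
proof -
  have "cmod (s ^ X 0 \<omega>) \<le> 1"
    using assms by (simp add: norm_power power_le_one)
  then show ?thesis
    using mult_mono[of "cmod (s ^ X 0 \<omega>)" 1 "cmod ((1 / s) ^ premium \<omega>)" "(1 / cmod s) ^ m"]
      norm_inverse_power_premium_le[OF assms]
    by (simp add: step_power_def norm_mult)
qed

lemma norm_truncation_correction_le:
  assumes "cmod s \<le> 1"
  shows "cmod (truncation_correction s i \<omega>) \<le> 2 * real m"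
proof -
  have "cmod (s - 1) \<le> 2"
    using norm_triangle_ineq4[of s 1] assms by simp
  with norm_sum_indicator_powers_le[OF assms]
  have "cmod (truncation_correction s i \<omega>) \<le> 2 * real (m - i)"
    unfolding truncation_correction_def norm_mult by (intro mult_mono) auto
  then show ?thesis
    by (rule order_trans) simp
qed

definition sup_pmf :: "nat \<Rightarrow> real" where
  "sup_pmf i = measure M {\<omega> \<in> space M. walk_sup X c \<theta> \<omega> = ereal (real i)}"

definition step_cdf :: "int \<Rightarrow> real" where
  "step_cdf j = measure M {\<omega> \<in> space M. real (X 0 \<omega>) - c * \<theta> 0 \<omega> \<le> real_of_int j}"

lemma integral_indicator_tail_sup:
  "(\<integral>\<omega>. indicator {ereal (real i)} (tail_sup \<omega>) \<partial>M) = complex_of_real (sup_pmf i)"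
proof -
  have "(\<integral>\<omega>. indicator {ereal (real i)} (tail_sup \<omega>) \<partial>M) =
      (\<integral>\<omega>. indicator {ereal (real i)} (walk_sup X c \<theta> \<omega>) \<partial>M :: complex)"
    by (rule integral_tail_sup[of "indicator {ereal (real i)}"]) simp
  also have "\<dots> = (\<integral>\<omega>. of_real (indicator {\<omega> \<in> space M. walk_sup X c \<theta> \<omega> = ereal (real i)} \<omega>) \<partial>M)"
    by (intro Bochner_Integration.integral_cong) (auto split: split_indicator)
  finally show ?thesis
    by (simp add: sup_pmf_def Int_absorb2)
qed

lemma integral_step_power:
  assumes "s \<noteq> 0" and "cmod s \<le> 1"
  shows "(\<integral>\<omega>. step_power s \<omega> \<partial>M) =
    pgf M (\<lambda>\<omega>. real (X 0 \<omega>)) s * pgf M (\<lambda>\<omega>. c * \<theta> 0 \<omega>) (1 / s)"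
proof -
  have "(\<integral>\<omega>. step_power s \<omega> \<partial>M) = (\<integral>\<omega>. s ^ X 0 \<omega> \<partial>M) * (\<integral>\<omega>. (1 / s) ^ premium \<omega> \<partial>M)"
    unfolding step_power_def using assms norm_inverse_power_premium_le[OF assms]
    by (intro integral_indep_var_mult_bounded[OF indep_claim_premium, where Cu = 1 and Cv = "(1 / cmod s) ^ m"])
      (auto simp: norm_power power_le_one)
  then show ?thesis
    using integral_power_claim[OF assms(2)] integral_power_premium by simp
qed

lemma prob_shifted_step_le:
  "measure M {\<omega> \<in> space M. X 0 \<omega> + (m - premium \<omega>) \<le> j} = step_cdf (- int m + int j)"
  unfolding step_cdf_def
proof (rule prob_eq_AE)
  show "AE \<omega> in M. X 0 \<omega> + (m - premium \<omega>) \<le> j \<longleftrightarrow> real (X 0 \<omega>) - c * \<theta> 0 \<omega> \<le> real_of_int (- int m + int j)"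
    using AE_premium by eventually_elim (use premium_le_m in auto)
qed measurable

lemma integral_truncation_correction:
  "(\<integral>\<omega>. truncation_correction s i \<omega> \<partial>M) =
    (s - 1) * (\<Sum>j<m - i. s ^ (i + j) * complex_of_real (step_cdf (- int m + int j)))"
proof -
  define A where "A j = {\<omega> \<in> space M. X 0 \<omega> + (m - premium \<omega>) \<le> j}" for j
  have [measurable]: "A j \<in> sets M" for j
    unfolding A_def by measurable
  have "integrable M (\<lambda>\<omega>. s ^ (i + j) * complex_of_real (indicator (A j) \<omega>))" for j
    by (intro integrable_mult_right integrable_of_real integrable_real_indicator) (auto simp: less_top[symmetric])
  then have "(\<integral>\<omega>. (\<Sum>j<m - i. s ^ (i + j) * of_real (indicator (A j) \<omega>)) \<partial>M) =
      (\<Sum>j<m - i. s ^ (i + j) * complex_of_real (measure M (A j)))"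
    by (simp add: integral_sum)
  moreover have "(\<integral>\<omega>. (\<Sum>j<m - i. if X 0 \<omega> + (m - premium \<omega>) \<le> j then s ^ (i + j) else 0) \<partial>M) =
      (\<integral>\<omega>. (\<Sum>j<m - i. s ^ (i + j) * of_real (indicator (A j) \<omega>)) \<partial>M)"
    by (intro Bochner_Integration.integral_cong sum.cong refl) (auto simp: A_def split: split_indicator)
  ultimately show ?thesis
    by (simp add: truncation_correction_def A_def prob_shifted_step_le)
qed

lemma integral_step_power_mult_tail_sup:
  assumes "s \<noteq> 0" and "cmod s \<le> 1"
  shows "(\<integral>\<omega>. step_power s \<omega> * power_ereal s (tail_sup \<omega>) \<partial>M) =
    pgf M (\<lambda>\<omega>. real (X 0 \<omega>)) s * pgf M (\<lambda>\<omega>. c * \<theta> 0 \<omega>) (1 / s) *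
    (\<integral>\<omega>. power_ereal s (walk_sup X c \<theta> \<omega>) \<partial>M)"
  using integral_first_step_tail_sup_mult[of "power_ereal s" "\<lambda>(x, n). s ^ x * (1 / s) ^ n" "(1 / cmod s) ^ m" 1]
    norm_step_power_le[OF assms] norm_power_ereal_le_1[OF assms(2)] integral_tail_sup[of "power_ereal s"]
    integral_step_power[OF assms]
  by (simp add: step_power_def)

lemma integral_truncation_correction_mult_tail_sup:
  assumes "cmod s \<le> 1"
  shows "(\<integral>\<omega>. truncation_correction s i \<omega> * indicator {ereal (real i)} (tail_sup \<omega>) \<partial>M) =
    (s - 1) * (\<Sum>j<m - i. s ^ (i + j) * complex_of_real (step_cdf (- int m + int j))) * sup_pmf i"
  using integral_first_step_tail_sup_mult[of "indicator {ereal (real i)}"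
      "\<lambda>(x, n). (s - 1) * (\<Sum>j<m - i. if x + (m - n) \<le> j then s ^ (i + j) else 0)" "2 * real m" 1]
    norm_truncation_correction_le[OF assms] integral_indicator_tail_sup integral_truncation_correction
  by (simp add: truncation_correction_def split: split_indicator)

lemma integral_power_walk_sup_expansion:
  assumes "s \<noteq> 0" and "cmod s \<le> 1"
  shows "s ^ m * (\<integral>\<omega>. power_ereal s (walk_sup X c \<theta> \<omega>) \<partial>M) =
    s ^ m * (\<integral>\<omega>. step_power s \<omega> * power_ereal s (tail_sup \<omega>) \<partial>M) +
    (\<Sum>i<m. \<integral>\<omega>. truncation_correction s i \<omega> * indicator {ereal (real i)} (tail_sup \<omega>) \<partial>M)"
proof -
  have "cmod (step_power s \<omega> * power_ereal s (tail_sup \<omega>)) \<le> (1 / cmod s) ^ m" for \<omega>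
    using mult_mono[OF norm_step_power_le[OF assms] norm_power_ereal_le_1[OF assms(2)]] by (simp add: norm_mult)
  then have step_int: "integrable M (\<lambda>\<omega>. step_power s \<omega> * power_ereal s (tail_sup \<omega>))"
    by (intro integrable_const_bound[where B = "(1 / cmod s) ^ m"]) auto
  have correction_int: "integrable M (\<lambda>\<omega>. truncation_correction s i \<omega> * indicator {ereal (real i)} (tail_sup \<omega>))"
    for i
    using norm_truncation_correction_le[OF assms(2)]
    by (intro integrable_const_bound[where B = "2 * real m"]) (auto simp: norm_mult indicator_def)
  have "s ^ m * (\<integral>\<omega>. power_ereal s (walk_sup X c \<theta> \<omega>) \<partial>M) =
      (\<integral>\<omega>. s ^ m * (step_power s \<omega> * power_ereal s (tail_sup \<omega>)) +
        (\<Sum>i<m. truncation_correction s i \<omega> * indicator {ereal (real i)} (tail_sup \<omega>)) \<partial>M)"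
    unfolding integral_mult_right_zero[symmetric]
  proof (rule integral_cong_AE)
    show "AE \<omega> in M. s ^ m * power_ereal s (walk_sup X c \<theta> \<omega>) =
        s ^ m * (step_power s \<omega> * power_ereal s (tail_sup \<omega>)) +
        (\<Sum>i<m. truncation_correction s i \<omega> * indicator {ereal (real i)} (tail_sup \<omega>))"
      using AE_space AE_premium
    proof eventually_elim
      case (elim \<omega>)
      then show ?case
        by (rule power_walk_sup_expansion[OF assms(1)])
    qed
  qed measurable
  also have "\<dots> = s ^ m * (\<integral>\<omega>. step_power s \<omega> * power_ereal s (tail_sup \<omega>) \<partial>M) +
      (\<Sum>i<m. \<integral>\<omega>. truncation_correction s i \<omega> * indicator {ereal (real i)} (tail_sup \<omega>) \<partial>M)"
  proof -
    have "integrable M (\<lambda>\<omega>. \<Sum>i<m. truncation_correction s i \<omega> * indicator {ereal (real i)} (tail_sup \<omega>))"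
      using correction_int by (rule Bochner_Integration.integrable_sum)
    with step_int show ?thesis
      by (simp only: Bochner_Integration.integral_add integrable_mult_right integral_mult_right_zero
          Bochner_Integration.integral_sum[OF correction_int])
  qed
  finally show ?thesis .
qed

lemma Ppoly_factorization:
  assumes "s \<noteq> 0" and "cmod s \<le> 1"
  shows "(s - 1) * Ppoly m sup_pmf step_cdf s =
    s ^ m * - (\<integral>\<omega>. power_ereal s (walk_sup X c \<theta> \<omega>) \<partial>M) *
    (pgf M (\<lambda>\<omega>. real (X 0 \<omega>)) s * pgf M (\<lambda>\<omega>. c * \<theta> 0 \<omega>) (1 / s) - 1)"
proof -
  define Q where "Q = (\<integral>\<omega>. power_ereal s (walk_sup X c \<theta> \<omega>) \<partial>M)"
  define H where "H = pgf M (\<lambda>\<omega>. real (X 0 \<omega>)) s * pgf M (\<lambda>\<omega>. c * \<theta> 0 \<omega>) (1 / s)"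
  define S where "S = (\<Sum>i<m. (s - 1) * (\<Sum>j<m - i. s ^ (i + j) * complex_of_real (step_cdf (- int m + int j))) *
    sup_pmf i)"
  have "s ^ m * Q = s ^ m * (H * Q) + S"
    using integral_power_walk_sup_expansion[OF assms]
    unfolding integral_step_power_mult_tail_sup[OF assms] integral_truncation_correction_mult_tail_sup[OF assms(2)]
    by (simp add: Q_def H_def S_def)
  then have "S = s ^ m * Q - s ^ m * (H * Q)"
    by (simp add: eq_diff_eq add.commute)
  moreover have "(s - 1) * Ppoly m sup_pmf step_cdf s = S"
    unfolding Ppoly_def S_def sum_distrib_left by (simp add: mult_ac add.commute sum_distrib_left)
  ultimately show ?thesis
    by (simp add: Q_def[symmetric] H_def[symmetric] algebra_simps)
qed

lemma norm_integral_power_ereal_le_1: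
  assumes "cmod s \<le> 1"
  shows "cmod (\<integral>\<omega>. power_ereal s (walk_sup X c \<theta> \<omega>) \<partial>M) \<le> 1"
proof -
  have "integrable M (\<lambda>\<omega>. power_ereal s (walk_sup X c \<theta> \<omega>))"
    using norm_power_ereal_le_1[OF assms] by (intro integrable_const_bound[where B = 1]) auto
  then have "cmod (\<integral>\<omega>. power_ereal s (walk_sup X c \<theta> \<omega>) \<partial>M) \<le> (\<integral>\<omega>. 1 \<partial>M)"
    using norm_power_ereal_le_1[OF assms]
    by (intro order_trans[OF integral_norm_bound integral_mono]) auto
  then show ?thesis
    by (simp add: prob_space)
qed

end

lemma Ppoly_holomorphic: "Ppoly m p F holomorphic_on UNIV"
  unfolding Ppoly_def[abs_def] by (intro holomorphic_intros)

theorem corollary2p4: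
  fixes M :: "'a measure" and X :: "nat \<Rightarrow> 'a \<Rightarrow> nat" and \<theta> :: "nat \<Rightarrow> 'a \<Rightarrow> real"
    and c :: real and m :: nat and \<alpha> :: complex and r :: nat
  assumes "prob_space M"
    and "\<And>i. X i \<in> measurable M (count_space UNIV)"
    and "\<And>i. \<theta> i \<in> borel_measurable M"
    and "c > 0"
    and "\<And>i \<omega>. \<omega> \<in> space M \<Longrightarrow> c * \<theta> i \<omega> \<in> \<nat>"
    and "prob_space.indep_vars M (\<lambda>_. borel)
           (\<lambda>k \<omega>. case k of Inl i \<Rightarrow> real (X i \<omega>) | Inr i \<Rightarrow> \<theta> i \<omega>) UNIV"
    and "\<And>i. distr M (count_space UNIV) (X i) = distr M (count_space UNIV) (X 0)"
    and "\<And>i. distr M borel (\<theta> i) = distr M borel (\<theta> 0)"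
    and "measure M {\<omega> \<in> space M. c * \<theta> 0 \<omega> \<le> real m} = 1"
    and "integrable M (\<lambda>\<omega>. real (X 0 \<omega>))"
    and "c * prob_space.expectation M (\<theta> 0) - prob_space.expectation M (\<lambda>\<omega>. real (X 0 \<omega>)) > 0"
    and "cmod \<alpha> \<le> 1" and "\<alpha> \<noteq> 0" and "\<alpha> \<noteq> 1"
    and "pgf M (\<lambda>\<omega>. real (X 0 \<omega>)) \<alpha> * pgf M (\<lambda>\<omega>. c * \<theta> 0 \<omega>) (1 / \<alpha>) = 1"
  defines "\<pi> \<equiv> \<lambda>i::nat. measure M {\<omega> \<in> space M. walk_sup X c \<theta> \<omega> = ereal (real i)}"
    and "F \<equiv> \<lambda>j::int. measure M {\<omega> \<in> space M. real (X 0 \<omega>) - c * \<theta> 0 \<omega> \<le> real_of_int j}"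
  shows "Ppoly m \<pi> F \<alpha> = 0 \<and>
    ((r \<in> {1..m-1} \<and>
      root_multiplicity_disc
        (\<lambda>s. pgf M (\<lambda>\<omega>. real (X 0 \<omega>)) s * pgf M (\<lambda>\<omega>. c * \<theta> 0 \<omega>) (1 / s) - 1) \<alpha> r)
     \<longrightarrow> (\<forall>n<r. (deriv ^^ n) (Ppoly m \<pi> F) \<alpha> = 0))"
proof -
  interpret discrete_risk_walk M X \<theta> c m
    using assms(1-3,5-9) by (simp add: discrete_risk_walk_def discrete_risk_walk_axioms_def)
  define Q where "Q s = - (\<integral>\<omega>. power_ereal s (walk_sup X c \<theta> \<omega>) \<partial>M)" for s
  define f where "f s = pgf M (\<lambda>\<omega>. real (X 0 \<omega>)) s * pgf M (\<lambda>\<omega>. c * \<theta> 0 \<omega>) (1 / s) - 1" for s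
  have "\<pi> = sup_pmf" "F = step_cdf"
    by (simp_all add: \<pi>_def F_def sup_pmf_def step_cdf_def fun_eq_iff)
  then have factor: "(s - 1) * Ppoly m \<pi> F s = s ^ m * Q s * f s" if "s \<noteq> 0" "cmod s \<le> 1" for s
    using Ppoly_factorization[OF that] by (simp add: Q_def f_def)
  have Q_bound: "cmod (Q s) \<le> 1" if "s \<noteq> 0" "cmod s \<le> 1" for s
    using norm_integral_power_ereal_le_1[OF that(2)] by (simp add: Q_def)
  have "Ppoly m \<pi> F \<alpha> = 0"
    using factor[OF assms(13,12)] assms(14,15) by (simp add: f_def)
  moreover have "\<forall>n<r. (deriv ^^ n) (Ppoly m \<pi> F) \<alpha> = 0" if "root_multiplicity_disc f \<alpha> r"
    using higher_deriv_eq_0_if_dominated_by_root[OF Ppoly_holomorphic factor Q_bound assms(12-14) that]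
    by blast
  ultimately show ?thesis
    by (simp add: f_def[abs_def])
qed

end
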